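(* Let $y_1,\dots,y_l\in\mathbf{Y}$ be a training set, let $y'\in\mathbf{Y}$ be a postulated label, and let $\tau\in[0,1]$. Then the leave-one-out cross-conformal p-value equals the full conformal p-value. Equivalently, with $K=l$ folds, the quantities $A^{\mathrm{CCP}},B^{\mathrm{CCP}}$ coincide with $A^{\mathrm{CP}},B^{\mathrm{CP}}$, and hence $A^{\mathrm{CCP}}+\tau B^{\mathrm{CCP}}=A^{\mathrm{CP}}+\tau B^{\mathrm{CP}}$.
   Context: Setting: $\mathbf{Y}$ is a finite label set, the training set is $y_1,\dots,y_l\in\mathbf{Y}$, and $n_u$ denotes the number of $i$ with $y_i=u$. Full conformal p-value for the postulated label $y'$: $p^{\mathrm{CP}}_{y'}=A^{\mathrm{CP}}+\tau B^{\mathrm{CP}}$, where \[ A^{\mathrm{CP}}:=\frac{\sum_{u\in\mathbf{Y}\setminus\{y'\}:\,n_u<n_{y'}+1}n_u}{l+1},\qquad B^{\mathrm{CP}}:=\frac{\sum_{u:\,n_u=n_{y'}+1}n_u+n_{y'}+1}{l+1}. \] Leave-one-out cross-conformal p-value (number of folds $K=l$, with fold $k$ consisting of the single observation $y_k$): for $k=1,\dots,l$ and $u\in\mathbf{Y}$, let $n_{k,u}$ be the number of $i\ne k$ with $y_i=u$, and let $n'_{k,u}:=1$ if $y_k=u$ and $0$ otherwise. Set \[ A_k:=\sum_{u:\,n_{k,u}<n_{k,y'}}n'_{k,u},\qquad B_k:=\sum_{u:\,n_{k,u}=n_{k,y'}}n'_{k,u}, \] and \[ A^{\mathrm{CCP}}:=\frac{\sum_{k=1}^lA_k}{l+1},\qquad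 B^{\mathrm{CCP}}:=\frac{\sum_{k=1}^lB_k+1}{l+1}. \] The leave-one-out cross-conformal p-value is $p^{\mathrm{CCP}}_{y'}:=A^{\mathrm{CCP}}+\tau B^{\mathrm{CCP}}$. *)

theory Defs
  imports Complex_Main
begin

definition n_cnt :: "(nat \<Rightarrow> 'a) \<Rightarrow> nat \<Rightarrow> 'a \<Rightarrow> nat" where
  "n_cnt y l u = card {i \<in> {1..l}. y i = u}"

definition n_loo :: "(nat \<Rightarrow> 'a) \<Rightarrow> nat \<Rightarrow> nat \<Rightarrow> 'a \<Rightarrow> nat" where
  "n_loo y l k u = card {i \<in> {1..l}. i \<noteq> k \<and> y i = u}"

definition n_fold :: "(nat \<Rightarrow> 'a) \<Rightarrow> nat \<Rightarrow> 'a \<Rightarrow> nat" where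
  "n_fold y k u = (if y k = u then 1 else 0)"

definition A_CP :: "'a set \<Rightarrow> (nat \<Rightarrow> 'a) \<Rightarrow> nat \<Rightarrow> 'a \<Rightarrow> real" where
  "A_CP YY y l y' =
     (\<Sum>u\<in>{u \<in> YY - {y'}. n_cnt y l u < n_cnt y l y' + 1}. real (n_cnt y l u)) / real (l + 1)"

definition B_CP :: "'a set \<Rightarrow> (nat \<Rightarrow> 'a) \<Rightarrow> nat \<Rightarrow> 'a \<Rightarrow> real" where
  "B_CP YY y l y' =
     ((\<Sum>u\<in>{u \<in> YY. n_cnt y l u = n_cnt y l y' + 1}. real (n_cnt y l u))
       + real (n_cnt y l y') + 1) / real (l + 1)"

definition A_k :: "'a set \<Rightarrow> (nat \<Rightarrow> 'a) \<Rightarrow> nat \<Rightarrow> 'a \<Rightarrow> nat \<Rightarrow> nat" where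
  "A_k YY y l y' k = (\<Sum>u\<in>{u \<in> YY. n_loo y l k u < n_loo y l k y'}. n_fold y k u)"

definition B_k :: "'a set \<Rightarrow> (nat \<Rightarrow> 'a) \<Rightarrow> nat \<Rightarrow> 'a \<Rightarrow> nat \<Rightarrow> nat" where
  "B_k YY y l y' k = (\<Sum>u\<in>{u \<in> YY. n_loo y l k u = n_loo y l k y'}. n_fold y k u)"

definition A_CCP :: "'a set \<Rightarrow> (nat \<Rightarrow> 'a) \<Rightarrow> nat \<Rightarrow> 'a \<Rightarrow> real" where
  "A_CCP YY y l y' = real (\<Sum>k=1..l. A_k YY y l y' k) / real (l + 1)"

definition B_CCP :: "'a set \<Rightarrow> (nat \<Rightarrow> 'a) \<Rightarrow> nat \<Rightarrow> 'a \<Rightarrow> real" where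
  "B_CCP YY y l y' = (real (\<Sum>k=1..l. B_k YY y l y' k) + 1) / real (l + 1)"

definition p_CP :: "'a set \<Rightarrow> (nat \<Rightarrow> 'a) \<Rightarrow> nat \<Rightarrow> 'a \<Rightarrow> real \<Rightarrow> real" where
  "p_CP YY y l y' \<tau> = A_CP YY y l y' + \<tau> * B_CP YY y l y'"

definition p_CCP :: "'a set \<Rightarrow> (nat \<Rightarrow> 'a) \<Rightarrow> nat \<Rightarrow> 'a \<Rightarrow> real \<Rightarrow> real" where
  "p_CCP YY y l y' \<tau> = A_CCP YY y l y' + \<tau> * B_CCP YY y l y'"

end

theory Submission
  imports Defs
begin

text \<open>Removing the test observation y_k lowers the count of its own label by one and leaves
  every other count unchanged. Hence in fold k the label y_k is compared with y' as follows:
  if y_k = y' both counts drop and they tie; otherwise n_{y_k} - 1 is compared with n_{y'}.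
  So fold k contributes to A exactly when y_k \<noteq> y' and n_{y_k} < n_{y'} + 1, and to B
  exactly when n_{y_k} = n_{y'} + 1 or y_k = y'. Summing over k and grouping the
  observations by label turns these indicators into the label counts of the full
  conformal p-value.\<close>

lemma n_loo_eq:
  assumes "k \<in> {1..l}"
  shows "n_loo y l k u = (if y k = u then n_cnt y l u - 1 else n_cnt y l u)"
proof -
  have "{i \<in> {1..l}. i \<noteq> k \<and> y i = u} = {i \<in> {1..l}. y i = u} - {k}" by auto
  with assms show ?thesis
    unfolding n_loo_def n_cnt_def by (auto simp: card_Diff_singleton)
qed

lemma n_cnt_label_pos:
  assumes "k \<in> {1..l}"
  shows "0 < n_cnt y l (y k)"
  unfolding n_cnt_def using assms by (subst card_gt_0_iff) auto

lemma sum_n_fold: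
  assumes "finite YY" "y k \<in> YY"
  shows "(\<Sum>u\<in>{u \<in> YY. P u}. n_fold y k u) = (if P (y k) then 1 else 0)"
  using assms by (simp add: n_fold_def sum.delta)

lemma sum_indicator_eq_sum_n_cnt:
  assumes "finite S"
  shows "(\<Sum>k=1..l. if y k \<in> S then 1 else 0 :: nat) = (\<Sum>u\<in>S. n_cnt y l u)"
proof -
  have "(\<Sum>u\<in>S. n_cnt y l u) = (\<Sum>u\<in>S. \<Sum>k=1..l. if y k = u then 1 else 0 :: nat)"
    unfolding n_cnt_def by (simp add: sum.If_cases Int_def conj_commute)
  also have "\<dots> = (\<Sum>k=1..l. \<Sum>u\<in>S. if y k = u then 1 else 0 :: nat)"
    by (rule sum.swap)
  also have "\<dots> = (\<Sum>k=1..l. if y k \<in> S then 1 else 0 :: nat)"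
    using assms by (simp add: sum.delta)
  finally show ?thesis by simp
qed

lemma A_k_eq:
  assumes "finite YY" "k \<in> {1..l}" "y k \<in> YY"
  shows "A_k YY y l y' k =
    (if y k \<in> {u \<in> YY - {y'}. n_cnt y l u < n_cnt y l y' + 1} then 1 else 0)"
  using assms n_loo_eq[OF assms(2), of y] n_cnt_label_pos[OF assms(2), of y]
  by (auto simp: A_k_def sum_n_fold)

lemma B_k_eq:
  assumes "finite YY" "k \<in> {1..l}" "y k \<in> YY"
  shows "B_k YY y l y' k =
    (if y k \<in> {u \<in> YY. n_cnt y l u = n_cnt y l y' + 1} then 1 else 0)
    + (if y k \<in> {y'} then 1 else 0)"
  using assms n_loo_eq[OF assms(2), of y] n_cnt_label_pos[OF assms(2), of y]
  by (auto simp: B_k_def sum_n_fold)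

lemma sum_A_k:
  assumes "finite YY" "\<forall>i\<in>{1..l}. y i \<in> YY"
  shows "(\<Sum>k=1..l. A_k YY y l y' k) =
    (\<Sum>u\<in>{u \<in> YY - {y'}. n_cnt y l u < n_cnt y l y' + 1}. n_cnt y l u)"
  using assms by (simp add: A_k_eq sum_indicator_eq_sum_n_cnt [symmetric])

lemma sum_B_k:
  assumes "finite YY" "\<forall>i\<in>{1..l}. y i \<in> YY"
  shows "(\<Sum>k=1..l. B_k YY y l y' k) =
    (\<Sum>u\<in>{u \<in> YY. n_cnt y l u = n_cnt y l y' + 1}. n_cnt y l u) + n_cnt y l y'"
proof -
  have "(\<Sum>k=1..l. B_k YY y l y' k) =
      (\<Sum>k=1..l. if y k \<in> {u \<in> YY. n_cnt y l u = n_cnt y l y' + 1} then 1 else 0)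
      + (\<Sum>k=1..l. if y k \<in> {y'} then 1 else 0 :: nat)"
    using assms by (simp add: B_k_eq sum.distrib)
  also have "\<dots> =
      (\<Sum>u\<in>{u \<in> YY. n_cnt y l u = n_cnt y l y' + 1}. n_cnt y l u) + (\<Sum>u\<in>{y'}. n_cnt y l u)"
    using assms(1) sum_indicator_eq_sum_n_cnt [of "{u \<in> YY. n_cnt y l u = n_cnt y l y' + 1}"]
      sum_indicator_eq_sum_n_cnt [of "{y'}"] by simp
  finally show ?thesis by simp
qed

theorem proposition5:
  fixes YY :: "'a set" and y :: "nat \<Rightarrow> 'a" and l :: nat and y' :: 'a and \<tau> :: real
  assumes "finite YY"
    and "\<forall>i\<in>{1..l}. y i \<in> YY"
    and "y' \<in> YY"
    and "0 \<le> \<tau>" and "\<tau> \<le> 1"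
  shows "A_CCP YY y l y' = A_CP YY y l y' \<and> B_CCP YY y l y' = B_CP YY y l y'
         \<and> p_CCP YY y l y' \<tau> = p_CP YY y l y' \<tau>"
proof -
  \<comment> \<open>The identity holds for every \<tau> and does not need y' \<in> YY.\<close>
  have A: "A_CCP YY y l y' = A_CP YY y l y'"
    unfolding A_CCP_def A_CP_def sum_A_k[OF assms(1,2)] by (simp only: of_nat_sum)
  have B: "B_CCP YY y l y' = B_CP YY y l y'"
    unfolding B_CCP_def B_CP_def sum_B_k[OF assms(1,2)] by (simp only: of_nat_add of_nat_sum)
  show ?thesis
    using A B unfolding p_CCP_def p_CP_def by simp
qed

end
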